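(* Let $U,X,Y,W,Z$ be Banach spaces, let $S_1=\operatorname{Sys}(A,B,C)$ be a $(U,X,Y)$-relation and $S_2=\operatorname{Sys}(E,F,G)$ a $(Y,W,Z)$-relation, and assume $E$ is bounded. Fix any $\lambda\in\mathbb{C}\setminus\operatorname{Spec}(A)$ and let $C_\lambda:=C(\lambda-A)^{-1}:X\to Y$ (a bounded operator). Then $$S_2\circ S_1\cong \operatorname{Sys}\left(\begin{bmatrix} A & 0\\ \lambda FC_\lambda-EFC_\lambda & E\end{bmatrix},\ \begin{bmatrix} B\\ FC_\lambda B\end{bmatrix},\ \begin{bmatrix} -GFC_\lambda & G\end{bmatrix}\right).$$ Furthermore, if $U=Z$, then $\operatorname{Close}(S_2\circ S_1)$ is isomorphic to $$\operatorname{Sys}\left(\begin{bmatrix} A&0\\0&E\end{bmatrix}+\begin{bmatrix} -BGFC_\lambda & BG\\ \lambda FC_\lambda-EFC_\lambda-FC_\lambda BGFC_\lambda & FC_\lambda BG\end{bmatrix},\ 0,\ 0\right).$$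
   Context: For Banach spaces $U,X,Y$, a $(U,X,Y)$-relation is any subset of $C^0(\mathbb{R}_{\ge 0},U)\times C^0(\mathbb{R}_{\ge 0},X)\times C^0(\mathbb{R}_{\ge 0},Y)$; elements $(u,x,y)$ are input, state, output, and $X$ is the state space. If $A$ generates a strongly continuous semigroup on $X$, $B:U\to X$ is bounded and $C:\operatorname{Dom}(A)\to Y$ is bounded for the graph norm, $\operatorname{Sys}(A,B,C)$ is the $(U,X,Y)$-relation of all $(u,x,y)$ with $u\in C^0(\mathbb{R}_{\ge0},U)$, $x\in C^0(\mathbb{R}_{\ge0},\operatorname{Dom}(A))\cap C^1(\mathbb{R}_{\ge0},X)$, $y\in C^0(\mathbb{R}_{\ge0},Y)$, $\dot x=Ax+Bu$, $y=Cx$. In $\operatorname{Sys}(E,F,G)$ the same conditions are assumed on $E,F,G$ (with state space $W$). Serial composition: for a $(U_1,X_1,Y_1)$-relation $S_1$ and a $(Y_1,X_2,Y_2)$-relation $S_2$, $S_2\circ S_1$ is the $(U_1,X_1\times X_2,Y_2)$-relation of all $(u_1,(x_1,x_2),y_2)$ for which some $y_1$ satisfies $(u_1,x_1,y_1)\in S_1$ and $(y_1,x_2,y_2)\in S_2$ (products carry the product norm). For a $(U,X,U)$-relation $S$, $\operatorname{Close}(S)$ is the $(\{0\},X,\{0\})$-relation of all $(0,x,0)$ such that $(u,x,u)\in S$ for some $u$. Two relations $S_1$ (a $(U,X_1,Y)$-relation) and $S_2$ (a $(U,X_2,Y)$-relation) are isomorphic, $S_1\cong S_2$, if there is a topological linear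 isomorphism $\phi:X_1\to X_2$ such that $(u,x,y)\mapsto(u,\phi\circ x,y)$ maps $S_1$ onto $S_2$. *)

theory Defs
  imports "HOL-Analysis.Analysis"
begin

class complex_banach = banach +
  fixes cscale :: "complex \<Rightarrow> 'a \<Rightarrow> 'a" (infixr \<open>*\<^sub>C\<close> 75)
  assumes cscale_add_right: "a *\<^sub>C (x + y) = a *\<^sub>C x + a *\<^sub>C y"
    and cscale_add_left: "(a + b) *\<^sub>C x = a *\<^sub>C x + b *\<^sub>C x"
    and cscale_cscale: "a *\<^sub>C (b *\<^sub>C x) = (a * b) *\<^sub>C x"
    and cscale_of_real: "(complex_of_real r) *\<^sub>C x = r *\<^sub>R x"
    and norm_cscale: "norm (a *\<^sub>C x) = cmod a * norm x"

instantiation prod :: (complex_banach, complex_banach) complex_banach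
begin
definition cscale_prod_def: "a *\<^sub>C (p :: 'a \<times> 'b) = (a *\<^sub>C fst p, a *\<^sub>C snd p)"
instance
proof
  fix a b :: complex and x y :: "'a \<times> 'b" and r :: real
  show "a *\<^sub>C (x + y) = a *\<^sub>C x + a *\<^sub>C y"
    by (simp add: cscale_prod_def cscale_add_right)
  show "(a + b) *\<^sub>C x = a *\<^sub>C x + b *\<^sub>C x"
    by (simp add: cscale_prod_def cscale_add_left)
  show "a *\<^sub>C (b *\<^sub>C x) = (a * b) *\<^sub>C x"
    by (simp add: cscale_prod_def cscale_cscale)
  show "(complex_of_real r) *\<^sub>C x = r *\<^sub>R x"
    by (simp add: cscale_prod_def cscale_of_real scaleR_prod_def)
  show "norm (a *\<^sub>C x) = cmod a * norm x"
    by (simp add: cscale_prod_def norm_prod_def norm_cscale power_mult_distrib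
        flip: distrib_left, simp add: real_sqrt_mult)
qed
end

text \<open>The zero space \<open>{0}\<close>, realised as the type \<open>unit\<close>.\<close>

instantiation unit :: real_normed_vector
begin
definition "0 = ()"
definition "x + y = ()"
definition "scaleR r (x::unit) = ()"
definition "norm (x::unit) = 0"
definition "sgn (x::unit) = ()"
definition "dist (x::unit) y = 0"
definition "uniformity = (INF e\<in>{0 <..}. principal {(x::unit, y). dist x y < e})"
definition "open (U :: unit set) = (\<forall>x\<in>U. eventually (\<lambda>(x', y). x' = x \<longrightarrow> y \<in> U) uniformity)"
instance
  by intro_classes (auto simp: zero_unit_def plus_unit_def
       scaleR_unit_def norm_unit_def sgn_unit_def dist_unit_def
       uniformity_unit_def open_unit_def)
end

instance unit :: banach
proof
  fix X :: "nat \<Rightarrow> unit"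
  have "X = (\<lambda>_. ())" by auto
  then show "convergent X" by (simp add: convergent_const)
qed

instantiation unit :: complex_banach
begin
definition "cscale a (x::unit) = ()"
instance
  by intro_classes (auto simp: norm_unit_def)
end

definition cblinear :: "('a::complex_banach \<Rightarrow> 'b::complex_banach) \<Rightarrow> bool" where
  "cblinear f \<longleftrightarrow> bounded_linear f \<and> (\<forall>c x. f (c *\<^sub>C x) = c *\<^sub>C f x)"

definition top_lin_iso :: "('a::complex_banach \<Rightarrow> 'b::complex_banach) \<Rightarrow> bool" where
  "top_lin_iso \<phi> \<longleftrightarrow> bij \<phi> \<and> cblinear \<phi> \<and> cblinear (inv \<phi>)"

text \<open>An (unbounded) operator is
  given by its domain \<open>D\<close> and its action \<open>A\<close> (values of \<open>A\<close> outside \<open>D\<close> are irrelevant).\<close>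
definition C0_semigroup :: "(real \<Rightarrow> 'a::complex_banach \<Rightarrow> 'a) \<Rightarrow> bool" where
  "C0_semigroup T \<longleftrightarrow> (\<forall>t\<ge>0. cblinear (T t)) \<and> T 0 = id
     \<and> (\<forall>s\<ge>0. \<forall>t\<ge>0. T (s + t) = T s \<circ> T t)
     \<and> (\<forall>x. ((\<lambda>t. T t x) \<longlongrightarrow> x) (at_right 0))"

definition generates_C0 :: "'a::complex_banach set \<Rightarrow> ('a \<Rightarrow> 'a) \<Rightarrow> bool" where
  "generates_C0 D A \<longleftrightarrow> (\<exists>T. C0_semigroup T
     \<and> D = {x. \<exists>y. ((\<lambda>h. (1 / h) *\<^sub>R (T h x - x)) \<longlongrightarrow> y) (at_right 0)}
     \<and> (\<forall>x\<in>D. ((\<lambda>h. (1 / h) *\<^sub>R (T h x - x)) \<longlongrightarrow> A x) (at_right 0)))"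

definition graph_bounded :: "'a::complex_banach set \<Rightarrow> ('a \<Rightarrow> 'a) \<Rightarrow> ('a \<Rightarrow> 'b::complex_banach) \<Rightarrow> bool" where
  "graph_bounded D A C \<longleftrightarrow>
     (\<forall>x\<in>D. \<forall>y\<in>D. C (x + y) = C x + C y) \<and> (\<forall>c. \<forall>x\<in>D. C (c *\<^sub>C x) = c *\<^sub>C C x)
     \<and> (\<exists>K. \<forall>x\<in>D. norm (C x) \<le> K * (norm x + norm (A x)))"

definition resolvent :: "'a::complex_banach set \<Rightarrow> ('a \<Rightarrow> 'a) \<Rightarrow> complex \<Rightarrow> 'a \<Rightarrow> 'a" where
  "resolvent D A l = inv_into D (\<lambda>x. l *\<^sub>C x - A x)"

definition spectrum :: "'a::complex_banach set \<Rightarrow> ('a \<Rightarrow> 'a) \<Rightarrow> complex set" where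
  "spectrum D A = {l. \<not> (bij_betw (\<lambda>x. l *\<^sub>C x - A x) D UNIV \<and> cblinear (resolvent D A l))}"

text \<open>Functions on \<open>\<real>\<^sub>\<ge>\<^sub>0\<close> are represented as functions on \<open>\<real>\<close> that vanish on the
  negative reals; \<open>C\<^sup>0(\<real>\<^sub>\<ge>\<^sub>0, V)\<close> is the set of those that are continuous on \<open>{0..}\<close>.\<close>
definition C0fun :: "(real \<Rightarrow> 'a::complex_banach) \<Rightarrow> bool" where
  "C0fun f \<longleftrightarrow> continuous_on {0..} f \<and> (\<forall>t<0. f t = 0)"

type_synonym ('u, 'x, 'y) relation = "((real \<Rightarrow> 'u) \<times> (real \<Rightarrow> 'x) \<times> (real \<Rightarrow> 'y)) set"

definition Sys :: "'x::complex_banach set \<Rightarrow> ('x \<Rightarrow> 'x) \<Rightarrow> ('u::complex_banach \<Rightarrow> 'x)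
    \<Rightarrow> ('x \<Rightarrow> 'y::complex_banach) \<Rightarrow> ('u, 'x, 'y) relation" where
  "Sys D A B C = {(u, x, y). C0fun u \<and> C0fun x \<and> C0fun y
     \<and> (\<forall>t\<ge>0. x t \<in> D) \<and> continuous_on {0..} (\<lambda>t. A (x t))
     \<and> (\<exists>x'. continuous_on {0..} x'
           \<and> (\<forall>t\<ge>0. (x has_vector_derivative x' t) (at t within {0..})
                    \<and> x' t = A (x t) + B (u t)))
     \<and> (\<forall>t\<ge>0. y t = C (x t))}"

definition serial :: "('u, 'x1, 'y1) relation \<Rightarrow> ('y1, 'x2, 'y2) relation \<Rightarrow> ('u, 'x1 \<times> 'x2, 'y2) relation"
  where "serial S1 S2 = {(u, (\<lambda>t. (x1 t, x2 t)), y2) | u x1 x2 y2.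
            \<exists>y1. (u, x1, y1) \<in> S1 \<and> (y1, x2, y2) \<in> S2}"

definition Close :: "('u, 'x, 'u) relation \<Rightarrow> (unit, 'x, unit) relation" where
  "Close S = {((\<lambda>_. ()), x, (\<lambda>_. ())) | x. \<exists>u. (u, x, u) \<in> S}"

definition rel_iso :: "('u, 'x1::complex_banach, 'y) relation \<Rightarrow> ('u, 'x2::complex_banach, 'y) relation \<Rightarrow> bool"
  (infix \<open>\<cong>\<^sub>R\<close> 50) where
  "S1 \<cong>\<^sub>R S2 \<longleftrightarrow> (\<exists>\<phi>. top_lin_iso \<phi> \<and> (\<lambda>(u, x, y). (u, \<phi> \<circ> x, y)) ` S1 = S2)"

end

theory Submission
  imports Defs
begin

(*
  The isomorphism is the shear (x, w) \<mapsto> (x, w + F C\<^sub>\<lambda> x). On Dom(A) we have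
  C = C\<^sub>\<lambda> (\<lambda> - A), so along a trajectory of the first system
  d/dt F C\<^sub>\<lambda> x\<^sub>1 = \<lambda> F C\<^sub>\<lambda> x\<^sub>1 - F y\<^sub>1 + F C\<^sub>\<lambda> B u: the unbounded feed-through F y\<^sub>1 = F C x\<^sub>1
  into the second system cancels, and the new state equation has only bounded couplings.
  Closing the loop u = G x\<^sub>2 then just adds B G to the generator of the cascade.
  The statement concerns classical trajectories only.
*)

lemma cblinear_bounded_linear: "cblinear f \<Longrightarrow> bounded_linear f"
  by (simp add: cblinear_def)

lemma cblinear_cscale: "cblinear f \<Longrightarrow> f (c *\<^sub>C x) = c *\<^sub>C f x"
  by (simp add: cblinear_def)

lemma cblinear_compose: "cblinear f \<Longrightarrow> cblinear g \<Longrightarrow> cblinear (\<lambda>x. f (g x))"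
  by (simp add: cblinear_def bounded_linear_compose)

lemma bounded_linear_cscale: "bounded_linear (\<lambda>x::'a::complex_banach. c *\<^sub>C x)"
proof (rule bounded_linear_intro[where K = "cmod c"])
  show "c *\<^sub>C (x + y) = c *\<^sub>C x + c *\<^sub>C y" for x y :: 'a
    by (rule cscale_add_right)
  show "c *\<^sub>C (r *\<^sub>R x) = r *\<^sub>R (c *\<^sub>C x)" for r and x :: 'a
    by (simp add: cscale_of_real [symmetric] cscale_cscale mult.commute)
  show "norm (c *\<^sub>C x) \<le> norm x * cmod c" for x :: 'a
    by (simp add: norm_cscale mult.commute)
qed

lemma graph_bounded_compose_cblinear:
  assumes C: "graph_bounded D A C" and R: "cblinear R" and R_D: "\<And>y. R y \<in> D"
    and AR: "bounded_linear (\<lambda>y. A (R y))"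
  shows "cblinear (\<lambda>y. C (R y))"
proof -
  interpret R: bounded_linear R using R by (rule cblinear_bounded_linear)
  have add: "\<And>x y. x \<in> D \<Longrightarrow> y \<in> D \<Longrightarrow> C (x + y) = C x + C y"
    and scale: "\<And>c x. x \<in> D \<Longrightarrow> C (c *\<^sub>C x) = c *\<^sub>C C x"
    using C by (auto simp: graph_bounded_def)
  obtain K where K: "\<And>x. x \<in> D \<Longrightarrow> norm (C x) \<le> K * (norm x + norm (A x))"
    using C unfolding graph_bounded_def by blast
  obtain M1 where M1: "\<And>y. norm (R y) \<le> norm y * M1"
    using R.bounded by blast
  obtain M2 where M2: "\<And>y. norm (A (R y)) \<le> norm y * M2"
    using bounded_linear.bounded [OF AR] by blast
  have "norm (C (R y)) \<le> norm y * (max K 0 * (M1 + M2))" for y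
  proof -
    have "norm (C (R y)) \<le> max K 0 * (norm (R y) + norm (A (R y)))"
      by (rule order_trans [OF K [OF R_D]]) (simp add: mult_right_mono)
    also have "\<dots> \<le> max K 0 * (norm y * M1 + norm y * M2)"
      using M1 M2 by (intro mult_left_mono add_mono) auto
    finally show ?thesis
      by (simp add: algebra_simps)
  qed
  moreover have "C (R (r *\<^sub>R y)) = r *\<^sub>R C (R y)" for r y
    using scale [OF R_D, of "complex_of_real r"] by (simp add: R.scaleR cscale_of_real)
  ultimately have "bounded_linear (\<lambda>y. C (R y))"
    by (intro bounded_linear_intro) (simp_all add: R.add add R_D)
  then show ?thesis
    using scale R_D by (simp add: cblinear_def cblinear_cscale [OF R])
qed

lemma graph_bounded_UNIV_cblinear:
  "graph_bounded UNIV E G \<Longrightarrow> bounded_linear E \<Longrightarrow> cblinear G"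
  using graph_bounded_compose_cblinear [of UNIV E G "\<lambda>y. y"]
  by (simp add: cblinear_def bounded_linear_ident)

lemma resolvent_not_in_spectrum:
  assumes "lam \<notin> spectrum D A"
  shows cblinear_resolvent: "cblinear (resolvent D A lam)"
    and resolvent_in_domain: "resolvent D A lam y \<in> D"
    and resolvent_right_inverse: "lam *\<^sub>C resolvent D A lam y - A (resolvent D A lam y) = y"
    and resolvent_left_inverse: "x \<in> D \<Longrightarrow> resolvent D A lam (lam *\<^sub>C x - A x) = x"
proof -
  have bij: "bij_betw (\<lambda>x. lam *\<^sub>C x - A x) D UNIV"
    using assms by (simp add: spectrum_def)
  show "cblinear (resolvent D A lam)"
    using assms by (simp add: spectrum_def)
  show "resolvent D A lam y \<in> D"
    using bij by (auto simp: resolvent_def bij_betw_def intro: inv_into_into)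
  show "lam *\<^sub>C resolvent D A lam y - A (resolvent D A lam y) = y"
    using bij by (auto simp: resolvent_def bij_betw_def intro: f_inv_into_f)
  show "x \<in> D \<Longrightarrow> resolvent D A lam (lam *\<^sub>C x - A x) = x"
    using bij_betw_inv_into_left [OF bij, of x] by (simp add: resolvent_def)
qed

lemma cblinear_graph_bounded_resolvent:
  assumes C: "graph_bounded D A C" and lam: "lam \<notin> spectrum D A"
  shows "cblinear (\<lambda>y. C (resolvent D A lam y))"
proof (rule graph_bounded_compose_cblinear [OF C cblinear_resolvent [OF lam]
      resolvent_in_domain [OF lam]])
  have "A (resolvent D A lam y) = lam *\<^sub>C resolvent D A lam y - y" for y
    using resolvent_right_inverse [OF lam, of y] by (simp add: algebra_simps)
  then show "bounded_linear (\<lambda>y. A (resolvent D A lam y))"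
    using cblinear_bounded_linear [OF cblinear_resolvent [OF lam]]
    by (simp add: bounded_linear_sub bounded_linear_compose [OF bounded_linear_cscale] bounded_linear_ident)
qed

lemma C0fun_bounded_linear_image:
  "bounded_linear f \<Longrightarrow> C0fun x \<Longrightarrow> C0fun (\<lambda>t. f (x t))"
  by (simp add: C0fun_def bounded_linear.continuous_on linear_simps)

lemma C0fun_add: "C0fun x \<Longrightarrow> C0fun y \<Longrightarrow> C0fun (\<lambda>t. x t + y t)"
  by (simp add: C0fun_def continuous_on_add)

lemma C0fun_diff: "C0fun x \<Longrightarrow> C0fun y \<Longrightarrow> C0fun (\<lambda>t. x t - y t)"
  by (simp add: C0fun_def continuous_on_diff)

lemma C0fun_Pair_iff: "C0fun (\<lambda>t. (x t, y t)) \<longleftrightarrow> C0fun x \<and> C0fun y"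
  by (auto simp: C0fun_def zero_prod_def intro: continuous_on_Pair
      dest: continuous_on_fst continuous_on_snd)

lemma C0fun_unit: "C0fun (v :: real \<Rightarrow> unit)"
proof -
  have "v = (\<lambda>_. ())"
    by (simp add: fun_eq_iff)
  then show ?thesis
    unfolding C0fun_def by (auto intro!: continuous_on_const simp: zero_unit_def)
qed

lemma mem_Sys_iff:
  assumes B: "bounded_linear B"
  shows "(u, x, y) \<in> Sys D A B C \<longleftrightarrow>
    C0fun u \<and> C0fun x \<and> C0fun y \<and> (\<forall>t\<ge>0. x t \<in> D) \<and> continuous_on {0..} (\<lambda>t. A (x t))
    \<and> (\<forall>t\<ge>0. (x has_vector_derivative A (x t) + B (u t)) (at t within {0..}))
    \<and> (\<forall>t\<ge>0. y t = C (x t))" (is "_ \<longleftrightarrow> ?classical")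
proof
  assume "(u, x, y) \<in> Sys D A B C"
  then show ?classical
    unfolding Sys_def by auto
next
  assume classical: ?classical
  then have "continuous_on {0..} (\<lambda>t. A (x t) + B (u t))"
    by (intro continuous_on_add bounded_linear.continuous_on [OF B]) (auto simp: C0fun_def)
  with classical show "(u, x, y) \<in> Sys D A B C"
    unfolding Sys_def by blast
qed

definition shear :: "('x \<Rightarrow> 'w) \<Rightarrow> 'x \<times> 'w \<Rightarrow> 'x \<times> 'w::ab_group_add" where
  "shear K p = (fst p, snd p + K (fst p))"

lemma shear_shear_uminus [simp]:
  "shear K (shear (\<lambda>x. - K x) p) = p" "shear (\<lambda>x. - K x) (shear K p) = p"
  by (simp_all add: shear_def)

lemma inv_shear: "inv (shear K) = shear (\<lambda>x. - K x)"
  by (rule inv_equality) simp_all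

lemma cblinear_shear:
  assumes K: "cblinear K"
  shows "cblinear (shear K)"
proof -
  have "bounded_linear (\<lambda>p::'a \<times> 'b. K (fst p))"
    using cblinear_bounded_linear [OF K] bounded_linear_fst by (rule bounded_linear_compose)
  then have "bounded_linear (shear K)"
    unfolding shear_def [abs_def]
    by (intro bounded_linear_Pair bounded_linear_add bounded_linear_fst bounded_linear_snd)
  then show ?thesis
    by (simp add: cblinear_def shear_def cscale_prod_def cscale_add_right cblinear_cscale [OF K])
qed

lemma top_lin_iso_shear:
  assumes K: "cblinear K"
  shows "top_lin_iso (shear K)"
proof -
  have "cblinear (\<lambda>x. - K x)"
    using K by (simp add: cblinear_def bounded_linear_minus
        linear_simps [OF bounded_linear_cscale])
  moreover have "bij (shear K)"
    by (rule o_bij [of "shear (\<lambda>x. - K x)"]) (simp_all add: fun_eq_iff)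
  ultimately show ?thesis
    using K by (simp add: top_lin_iso_def inv_shear cblinear_shear)
qed

lemma rel_isoI:
  assumes \<phi>: "top_lin_iso \<phi>"
    and to_S2: "\<And>u x y. (u, x, y) \<in> S1 \<Longrightarrow> (u, \<phi> \<circ> x, y) \<in> S2"
    and to_S1: "\<And>u x y. (u, x, y) \<in> S2 \<Longrightarrow> (u, inv \<phi> \<circ> x, y) \<in> S1"
  shows "S1 \<cong>\<^sub>R S2"
  unfolding rel_iso_def
proof (intro exI conjI)
  have "surj \<phi>"
    using \<phi> by (simp add: top_lin_iso_def bij_is_surj)
  then have \<phi>_inv: "\<phi> \<circ> (inv \<phi> \<circ> x) = x" for x :: "real \<Rightarrow> 'b"
    by (simp add: fun_eq_iff surj_f_inv_f)
  show "(\<lambda>(u, x, y). (u, \<phi> \<circ> x, y)) ` S1 = S2"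
  proof
    show "(\<lambda>(u, x, y). (u, \<phi> \<circ> x, y)) ` S1 \<subseteq> S2"
      using to_S2 by force
    show "S2 \<subseteq> (\<lambda>(u, x, y). (u, \<phi> \<circ> x, y)) ` S1"
    proof
      fix p
      assume "p \<in> S2"
      moreover obtain u x y where p: "p = (u, x, y)"
        by (cases p)
      ultimately have "(u, inv \<phi> \<circ> x, y) \<in> S1"
        using to_S1 by blast
      then show "p \<in> (\<lambda>(u, x, y). (u, \<phi> \<circ> x, y)) ` S1"
        by (rule rev_image_eqI) (simp add: p \<phi>_inv)
    qed
  qed
qed (rule \<phi>)

lemma mem_Close_iff: "(v, x, w) \<in> Close S \<longleftrightarrow> (\<exists>u. (u, x, u) \<in> S)"
proof -
  have "v = (\<lambda>_. ())" "w = (\<lambda>_. ())"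
    by (simp_all add: fun_eq_iff)
  then show ?thesis
    by (auto simp: Close_def)
qed

lemma rel_iso_Close:
  assumes "S1 \<cong>\<^sub>R S2"
  shows "Close S1 \<cong>\<^sub>R Close S2"
proof -
  obtain \<phi> where \<phi>: "top_lin_iso \<phi>" and S2: "S2 = (\<lambda>(u, x, y). (u, \<phi> \<circ> x, y)) ` S1"
    using assms by (auto simp: rel_iso_def)
  have inv_\<phi>: "inv \<phi> \<circ> (\<phi> \<circ> x) = x" for x :: "real \<Rightarrow> 'b"
    using \<phi> by (simp add: top_lin_iso_def fun_eq_iff bij_is_inj)
  show ?thesis
  proof (rule rel_isoI [OF \<phi>])
    fix v x w
    assume "(v, x, w) \<in> Close S1"
    then obtain u where "(u, x, u) \<in> S1"
      by (auto simp: mem_Close_iff)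
    then have "(u, \<phi> \<circ> x, u) \<in> S2"
      unfolding S2 by force
    then show "(v, \<phi> \<circ> x, w) \<in> Close S2"
      by (auto simp: mem_Close_iff)
  next
    fix v x w
    assume "(v, x, w) \<in> Close S2"
    then obtain u x1 where "(u, x1, u) \<in> S1" "x = \<phi> \<circ> x1"
      unfolding S2 mem_Close_iff by auto
    then show "(v, inv \<phi> \<circ> x, w) \<in> Close S1"
      by (auto simp: mem_Close_iff inv_\<phi>)
  qed
qed

lemma Close_Sys:
  assumes B: "bounded_linear B" and C: "bounded_linear C"
  shows "Close (Sys D A B C) = Sys D (\<lambda>x. A x + B (C x)) (\<lambda>_. 0) (\<lambda>_. ())"
proof -
  have feedback: "u = (\<lambda>t. C (x t))" if "(u, x, u) \<in> Sys D A B C" for u x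
  proof
    fix t
    show "u t = C (x t)"
      using that by (cases "t \<ge> 0") (auto simp: mem_Sys_iff [OF B] C0fun_def linear_simps(3) [OF C])
  qed
  have closed_loop: "(\<exists>u. (u, x, u) \<in> Sys D A B C) \<longleftrightarrow>
      (v, x, w) \<in> Sys D (\<lambda>x. A x + B (C x)) (\<lambda>_. 0) (\<lambda>_. ())"
    for x and v w :: "real \<Rightarrow> unit"
  proof -
    have "continuous_on {0..} (\<lambda>t. A (x t)) \<longleftrightarrow> continuous_on {0..} (\<lambda>t. A (x t) + B (C (x t)))"
      if "C0fun x"
    proof -
      have BCx: "continuous_on {0..} (\<lambda>t. B (C (x t)))"
        using that by (auto simp: C0fun_def intro: bounded_linear.continuous_on [OF B]
            bounded_linear.continuous_on [OF C])
      show ?thesis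
        using continuous_on_add [OF _ BCx, of "\<lambda>t. A (x t)"]
          continuous_on_diff [OF _ BCx, of "\<lambda>t. A (x t) + B (C (x t))"] by auto
    qed
    moreover have "(\<exists>u. (u, x, u) \<in> Sys D A B C) \<longleftrightarrow> (\<lambda>t. C (x t), x, \<lambda>t. C (x t)) \<in> Sys D A B C"
      using feedback by blast
    ultimately show ?thesis
      unfolding mem_Sys_iff [OF B] mem_Sys_iff [OF bounded_linear_zero]
      using C0fun_unit C0fun_bounded_linear_image [OF C, of x] by auto
  qed
  show ?thesis
  proof (rule set_eqI)
    fix p :: "(real \<Rightarrow> unit) \<times> (real \<Rightarrow> 'b) \<times> (real \<Rightarrow> unit)"
    obtain v x w where "p = (v, x, w)"
      by (cases p)
    then show "p \<in> Close (Sys D A B C) \<longleftrightarrow> p \<in> Sys D (\<lambda>x. A x + B (C x)) (\<lambda>_. 0) (\<lambda>_. ())"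
      using closed_loop [of x v w] by (simp add: mem_Close_iff)
  qed
qed

(* Cl plays the role of C\<^sub>\<lambda> = C (\<lambda> - A)\<^sup>-\<^sup>1; only the factorisation C = Cl (\<lambda> - A) on D is used. *)
locale cascade =
  fixes D :: "'x::complex_banach set" and A :: "'x \<Rightarrow> 'x"
    and B :: "'u::complex_banach \<Rightarrow> 'x" and C Cl :: "'x \<Rightarrow> 'y::complex_banach" and lam :: complex
    and E :: "'w::complex_banach \<Rightarrow> 'w" and F :: "'y \<Rightarrow> 'w"
  assumes Cl: "cblinear Cl" and C_eq: "\<And>x. x \<in> D \<Longrightarrow> C x = Cl (lam *\<^sub>C x - A x)"
    and B: "bounded_linear B" and E: "bounded_linear E" and F: "cblinear F"
begin

lemma graph_bounded_bounded_linear: "graph_bounded UNIV E G \<Longrightarrow> bounded_linear G"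
  using graph_bounded_UNIV_cblinear E by (blast intro: cblinear_bounded_linear)

lemma bounded_linear_F_Cl: "bounded_linear (\<lambda>x. F (Cl x))"
  using cblinear_compose [OF F Cl] by (rule cblinear_bounded_linear)

lemma F_Cl_A: "x \<in> D \<Longrightarrow> F (Cl (A x)) = lam *\<^sub>C F (Cl x) - F (C x)"
  by (simp add: C_eq linear_simps [OF bounded_linear_F_Cl] cblinear_cscale [OF cblinear_compose [OF F Cl]])

lemma bounded_linear_cascade_input: "bounded_linear (\<lambda>u. (B u, F (Cl (B u))))"
  using bounded_linear_compose [OF bounded_linear_F_Cl B] by (rule bounded_linear_Pair [OF B])

lemma serial_imp_Sys_shear:
  fixes G :: "'w \<Rightarrow> 'z::complex_banach"
  assumes G: "linear G" and "(u, z, y) \<in> serial (Sys D A B C) (Sys UNIV E F G)"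
  shows "(u, shear (\<lambda>x. F (Cl x)) \<circ> z, y) \<in> Sys (D \<times> UNIV)
    (\<lambda>(x, w). (A x, lam *\<^sub>C F (Cl x) - E (F (Cl x)) + E w))
    (\<lambda>u. (B u, F (Cl (B u)))) (\<lambda>(x, w). - G (F (Cl x)) + G w)"
proof -
  let ?K = "\<lambda>x. F (Cl x)"
  interpret K: bounded_linear ?K by (rule bounded_linear_F_Cl)
  interpret E: bounded_linear E by (rule E)
  interpret G: linear G by (rule G)
  obtain x1 x2 y1 where z: "z = (\<lambda>t. (x1 t, x2 t))"
    and S1: "(u, x1, y1) \<in> Sys D A B C" and S2: "(y1, x2, y) \<in> Sys UNIV E F G"
    using assms(2) unfolding serial_def by blast
  from S1 have u: "C0fun u" and x1: "C0fun x1" and x1_D: "\<And>t. t \<ge> 0 \<Longrightarrow> x1 t \<in> D"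
    and A_x1: "continuous_on {0..} (\<lambda>t. A (x1 t))"
    and x1': "\<And>t. t \<ge> 0 \<Longrightarrow> (x1 has_vector_derivative A (x1 t) + B (u t)) (at t within {0..})"
    and y1: "\<And>t. t \<ge> 0 \<Longrightarrow> y1 t = C (x1 t)"
    by (simp_all add: mem_Sys_iff [OF B])
  from S2 have x2: "C0fun x2" and y: "C0fun y"
    and x2': "\<And>t. t \<ge> 0 \<Longrightarrow> (x2 has_vector_derivative E (x2 t) + F (y1 t)) (at t within {0..})"
    and y_eq: "\<And>t. t \<ge> 0 \<Longrightarrow> y t = G (x2 t)"
    by (simp_all add: mem_Sys_iff [OF cblinear_bounded_linear [OF F]])
  have "shear ?K \<circ> z = (\<lambda>t. (x1 t, x2 t + ?K (x1 t)))"
    by (simp add: z shear_def fun_eq_iff)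
  moreover have "((\<lambda>t. (x1 t, x2 t + ?K (x1 t))) has_vector_derivative
      (A (x1 t), lam *\<^sub>C ?K (x1 t) - E (?K (x1 t)) + E (x2 t + ?K (x1 t))) + (B (u t), ?K (B (u t))))
      (at t within {0..})" if "t \<ge> 0" for t
  proof -
    have "(A (x1 t) + B (u t), E (x2 t) + F (y1 t) + ?K (A (x1 t) + B (u t))) =
        (A (x1 t), lam *\<^sub>C ?K (x1 t) - E (?K (x1 t)) + E (x2 t + ?K (x1 t))) + (B (u t), ?K (B (u t)))"
      using that by (simp add: y1 F_Cl_A x1_D K.add E.add)
    moreover have "((\<lambda>t. (x1 t, x2 t + ?K (x1 t))) has_vector_derivative
        (A (x1 t) + B (u t), E (x2 t) + F (y1 t) + ?K (A (x1 t) + B (u t)))) (at t within {0..})"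
      using that by (intro has_vector_derivative_Pair has_vector_derivative_add x1' x2' K.has_vector_derivative)
    ultimately show ?thesis
      by simp
  qed
  moreover have "continuous_on {0..}
      (\<lambda>t. (A (x1 t), lam *\<^sub>C ?K (x1 t) - E (?K (x1 t)) + E (x2 t + ?K (x1 t))))"
    using x1 x2 A_x1 unfolding C0fun_def
    by (intro continuous_intros K.continuous_on E.continuous_on
        bounded_linear.continuous_on [OF bounded_linear_cscale]) auto
  ultimately show ?thesis
    unfolding mem_Sys_iff [OF bounded_linear_cascade_input]
    using u x1 x2 y x1_D y_eq
    by (simp add: C0fun_Pair_iff C0fun_add C0fun_bounded_linear_image [OF bounded_linear_F_Cl] G.add)
qed

lemma Sys_shear_imp_serial:
  fixes G :: "'w \<Rightarrow> 'z::complex_banach"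
  assumes G: "linear G" and "(u, z, y) \<in> Sys (D \<times> UNIV)
    (\<lambda>(x, w). (A x, lam *\<^sub>C F (Cl x) - E (F (Cl x)) + E w))
    (\<lambda>u. (B u, F (Cl (B u)))) (\<lambda>(x, w). - G (F (Cl x)) + G w)"
  shows "(u, shear (\<lambda>x. - F (Cl x)) \<circ> z, y) \<in> serial (Sys D A B C) (Sys UNIV E F G)"
proof -
  let ?K = "\<lambda>x. F (Cl x)"
  interpret K: bounded_linear ?K by (rule bounded_linear_F_Cl)
  interpret E: bounded_linear E by (rule E)
  interpret G: linear G by (rule G)
  define x where "x = (\<lambda>t. fst (z t))"
  define w where "w = (\<lambda>t. snd (z t))"
  have z: "z = (\<lambda>t. (x t, w t))"
    by (simp add: x_def w_def)
  from assms(2) have u: "C0fun u" and x: "C0fun x" and w: "C0fun w" and y: "C0fun y"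
    and x_D: "\<And>t. t \<ge> 0 \<Longrightarrow> x t \<in> D"
    and A_z: "continuous_on {0..} (\<lambda>t. (A (x t), lam *\<^sub>C ?K (x t) - E (?K (x t)) + E (w t)))"
    and z': "\<And>t. t \<ge> 0 \<Longrightarrow> ((\<lambda>t. (x t, w t)) has_vector_derivative
      (A (x t) + B (u t), lam *\<^sub>C ?K (x t) - E (?K (x t)) + E (w t) + ?K (B (u t)))) (at t within {0..})"
    and y_eq: "\<And>t. t \<ge> 0 \<Longrightarrow> y t = - G (?K (x t)) + G (w t)"
    unfolding z by (simp_all add: mem_Sys_iff [OF bounded_linear_cascade_input] C0fun_Pair_iff)
  have A_x: "continuous_on {0..} (\<lambda>t. A (x t))"
    using continuous_on_fst [OF A_z] by simp
  have x': "(x has_vector_derivative A (x t) + B (u t)) (at t within {0..})" if "t \<ge> 0" for t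
    using bounded_linear.has_vector_derivative [OF bounded_linear_fst z' [OF that]] by (simp add: x_def)
  \<comment> \<open>C is only constrained on D, so the output is extended by zero by hand\<close>
  define y1 where "y1 = (\<lambda>t. if t < 0 then 0 else C (x t))"
  define x2 where "x2 = (\<lambda>t. w t - ?K (x t))"
  have y1: "C0fun y1"
    unfolding C0fun_def
  proof
    have "continuous_on {0..} (\<lambda>t. Cl (lam *\<^sub>C x t - A (x t)))"
      using x A_x unfolding C0fun_def
      by (intro continuous_intros bounded_linear.continuous_on [OF cblinear_bounded_linear [OF Cl]]
          bounded_linear.continuous_on [OF bounded_linear_cscale]) auto
    then show "continuous_on {0..} y1"
      by (rule continuous_on_eq) (simp add: y1_def C_eq x_D)
  qed (simp add: y1_def)
  have x2': "(x2 has_vector_derivative E (x2 t) + F (y1 t)) (at t within {0..})" if "t \<ge> 0" for t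
  proof -
    have "((\<lambda>t. snd (x t, w t) - ?K (fst (x t, w t))) has_vector_derivative
        lam *\<^sub>C ?K (x t) - E (?K (x t)) + E (w t) + ?K (B (u t)) - ?K (A (x t) + B (u t)))
        (at t within {0..})"
      using bounded_linear.has_vector_derivative [OF bounded_linear_snd z' [OF that]]
        bounded_linear.has_vector_derivative [OF bounded_linear_fst z' [OF that]]
      by (intro has_vector_derivative_diff K.has_vector_derivative) simp_all
    moreover have "lam *\<^sub>C ?K (x t) - E (?K (x t)) + E (w t) + ?K (B (u t)) - ?K (A (x t) + B (u t))
        = E (x2 t) + F (y1 t)"
      using that by (simp add: x2_def y1_def F_Cl_A x_D K.add E.diff)
    ultimately show ?thesis
      by (simp add: x2_def)
  qed
  have "(u, x, y1) \<in> Sys D A B C"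
    using u x y1 x_D A_x x' by (simp add: mem_Sys_iff [OF B] y1_def)
  moreover have "(y1, x2, y) \<in> Sys UNIV E F G"
  proof -
    have x2: "C0fun x2"
      unfolding x2_def using w x by (intro C0fun_diff C0fun_bounded_linear_image [OF bounded_linear_F_Cl])
    moreover have "continuous_on {0..} (\<lambda>t. E (x2 t))"
      using x2 unfolding C0fun_def by (simp add: E.continuous_on)
    moreover have "y t = G (x2 t)" if "t \<ge> 0" for t
      using y_eq [OF that] by (simp add: x2_def G.diff)
    ultimately show ?thesis
      using y1 y x2' by (simp add: mem_Sys_iff [OF cblinear_bounded_linear [OF F]])
  qed
  moreover have "shear (\<lambda>x. - ?K x) \<circ> z = (\<lambda>t. (x t, x2 t))"
    by (simp add: z shear_def x2_def fun_eq_iff)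
  ultimately show ?thesis
    unfolding serial_def by blast
qed

lemma serial_Sys_rel_iso:
  fixes G :: "'w \<Rightarrow> 'z::complex_banach"
  assumes G: "linear G"
  shows "serial (Sys D A B C) (Sys UNIV E F G) \<cong>\<^sub>R Sys (D \<times> UNIV)
    (\<lambda>(x, w). (A x, lam *\<^sub>C F (Cl x) - E (F (Cl x)) + E w))
    (\<lambda>u. (B u, F (Cl (B u)))) (\<lambda>(x, w). - G (F (Cl x)) + G w)"
  by (rule rel_isoI [OF top_lin_iso_shear [OF cblinear_compose [OF F Cl]]])
    (erule serial_imp_Sys_shear [OF G], unfold inv_shear, erule Sys_shear_imp_serial [OF G])

lemma bounded_linear_cascade_output:
  "bounded_linear G \<Longrightarrow> bounded_linear (\<lambda>(x, w). - G (F (Cl x)) + G w)"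
  unfolding case_prod_beta
  by (intro bounded_linear_add bounded_linear_minus bounded_linear_compose [OF _ bounded_linear_snd]
      bounded_linear_compose [OF _ bounded_linear_fst] bounded_linear_compose [OF _ bounded_linear_F_Cl])

lemma Close_serial_Sys_rel_iso:
  fixes G :: "'w \<Rightarrow> 'u"
  assumes G: "bounded_linear G"
  shows "Close (serial (Sys D A B C) (Sys UNIV E F G)) \<cong>\<^sub>R Sys (D \<times> UNIV)
    (\<lambda>(x, w). (A x + (- B (G (F (Cl x))) + B (G w)),
      E w + (lam *\<^sub>C F (Cl x) - E (F (Cl x)) - F (Cl (B (G (F (Cl x))))) + F (Cl (B (G w))))))
    (\<lambda>_. 0) (\<lambda>_. ())"
    (is "_ \<cong>\<^sub>R Sys _ ?closed_loop _ _")
proof -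
  let ?A = "\<lambda>(x, w). (A x, lam *\<^sub>C F (Cl x) - E (F (Cl x)) + E w)"
  let ?B = "\<lambda>u. (B u, F (Cl (B u)))"
  let ?C = "\<lambda>(x, w). - G (F (Cl x)) + G w"
  have "Close (serial (Sys D A B C) (Sys UNIV E F G)) \<cong>\<^sub>R Close (Sys (D \<times> UNIV) ?A ?B ?C)"
    by (rule rel_iso_Close [OF serial_Sys_rel_iso [OF bounded_linear.linear [OF G]]])
  also have "Close (Sys (D \<times> UNIV) ?A ?B ?C) = Sys (D \<times> UNIV) (\<lambda>p. ?A p + ?B (?C p)) (\<lambda>_. 0) (\<lambda>_. ())"
    by (rule Close_Sys [OF bounded_linear_cascade_input bounded_linear_cascade_output [OF G]])
  also have "(\<lambda>p. ?A p + ?B (?C p)) = ?closed_loop"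
    by (simp add: fun_eq_iff linear_simps [OF B] linear_simps [OF bounded_linear_F_Cl])
  finally show ?thesis .
qed

end

theorem proposition2p5:
  fixes DA :: "'x::complex_banach set" and A :: "'x \<Rightarrow> 'x"
    and B :: "'u::complex_banach \<Rightarrow> 'x" and C :: "'x \<Rightarrow> 'y::complex_banach"
    and E :: "'w::complex_banach \<Rightarrow> 'w" and F :: "'y \<Rightarrow> 'w" and G :: "'w \<Rightarrow> 'z::complex_banach"
    and lam :: complex
  assumes A_gen: "generates_C0 DA A"
    and B_bdd: "cblinear B"
    and C_bdd: "graph_bounded DA A C"
    and E_gen: "generates_C0 UNIV E"
    and E_bdd: "cblinear E"
    and F_bdd: "cblinear F"
    and G_bdd: "graph_bounded UNIV E G"
    and lam: "lam \<notin> spectrum DA A"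
  defines "C\<^sub>l \<equiv> (\<lambda>x. C (resolvent DA A lam x))"
  shows "serial (Sys DA A B C) (Sys UNIV E F G) \<cong>\<^sub>R
           Sys (DA \<times> UNIV)
             (\<lambda>(x, w). (A x, lam *\<^sub>C F (C\<^sub>l x) - E (F (C\<^sub>l x)) + E w))
             (\<lambda>u. (B u, F (C\<^sub>l (B u))))
             (\<lambda>(x, w). - G (F (C\<^sub>l x)) + G w)
       \<and> (\<forall>G' :: 'w \<Rightarrow> 'u. graph_bounded UNIV E G' \<longrightarrow>
           Close (serial (Sys DA A B C) (Sys UNIV E F G')) \<cong>\<^sub>R
           Sys (DA \<times> UNIV)
             (\<lambda>(x, w). (A x + (- B (G' (F (C\<^sub>l x))) + B (G' w)),
                        E w + (lam *\<^sub>C F (C\<^sub>l x) - E (F (C\<^sub>l x)) - F (C\<^sub>l (B (G' (F (C\<^sub>l x)))))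
                               + F (C\<^sub>l (B (G' w))))))
             (\<lambda>_::unit. (0, 0))
             (\<lambda>_. ()))"
proof -
  interpret cascade DA A B C C\<^sub>l lam E F
  proof (rule cascade.intro)
    show "cblinear C\<^sub>l"
      unfolding C\<^sub>l_def by (rule cblinear_graph_bounded_resolvent [OF C_bdd lam])
    show "C x = C\<^sub>l (lam *\<^sub>C x - A x)" if "x \<in> DA" for x
      unfolding C\<^sub>l_def using that by (simp add: resolvent_left_inverse [OF lam])
  qed (simp_all add: B_bdd E_bdd F_bdd cblinear_bounded_linear)
  show ?thesis
    using serial_Sys_rel_iso [OF bounded_linear.linear [OF graph_bounded_bounded_linear [OF G_bdd]]]
      Close_serial_Sys_rel_iso [OF graph_bounded_bounded_linear]
    by (simp add: zero_prod_def)
qed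

end
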